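(* Let $n$ be an odd positive integer and let $a,b$ be distinct integers with $0<a,b<n$, so that $G=C_{2n}(a,b,n)$ is a $5$-regular circulant graph. If $a$ and $b$ have the same parity (both even or both odd), then $G$ is word-representable.
   Context: Two distinct letters $x,y$ alternate in a word $w$ if, after deleting all other letters from $w$, the resulting word is of the form $xyxy\cdots$ or $yxyx\cdots$ (of even or odd length). A graph $G=(V,E)$ is word-representable if there is a word $w$ over the alphabet $V$, containing every letter of $V$ at least once, such that for all distinct $x,y\in V$, $xy\in E$ if and only if $x$ and $y$ alternate in $w$. For an integer $m$ and a set $R$ of positive integers each at most $m/2$, the circulant graph $C_m(R)$ has vertex set $\{0,1,\dots,m-1\}$, with $i$ and $j$ adjacent iff $\min(|i-j|,\,m-|i-j|)\in R$. $C_{2n}(a,b,n)$ denotes the circulant graph on $2n$ vertices with jump set $\{a,b,n\}$. *)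

theory Defs
  imports Main
begin

definition alternate :: "'a list \<Rightarrow> 'a \<Rightarrow> 'a \<Rightarrow> bool" where
  "alternate w x y \<longleftrightarrow>
     (let u = filter (\<lambda>c. c = x \<or> c = y) w in
      \<forall>i. Suc i < length u \<longrightarrow> u ! i \<noteq> u ! Suc i)"

definition word_representable :: "'a set \<Rightarrow> ('a \<Rightarrow> 'a \<Rightarrow> bool) \<Rightarrow> bool" where
  "word_representable V E \<longleftrightarrow>
     (\<exists>w. set w = V \<and>
          (\<forall>x\<in>V. \<forall>y\<in>V. x \<noteq> y \<longrightarrow> (E x y \<longleftrightarrow> alternate w x y)))"

definition circ_dist :: "nat \<Rightarrow> nat \<Rightarrow> nat \<Rightarrow> nat" where
  "circ_dist m i j = (let d = (if i \<le> j then j - i else i - j) in min d (m - d))"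

definition circulant_adj :: "nat \<Rightarrow> nat set \<Rightarrow> nat \<Rightarrow> nat \<Rightarrow> bool" where
  "circulant_adj m R i j \<longleftrightarrow> circ_dist m i j \<in> R"

end

theory Submission
  imports Defs "HOL-Library.Product_Lexorder" "HOL-Number_Theory.Cong"
begin

text \<open>List the vertices in a fixed order as a word P. A colouring c with values 0, 1, 2
  contributes the three copies of P from which the colours 2, 1 and 0, respectively, are deleted.
  If c stays or increases by one along every edge, read in the order of P, adjacent vertices still
  alternate in P followed by these copies, whereas a colour pattern (0, 2), (1, 0) or (2, 1) on a
  pair x, y creates a square \<open>xx\<close> or \<open>yy\<close>. So a graph is word-representable once each non-edge
  is separated by such a colouring. If the vertices carry integer heights h with
  \<open>N/4 < \<bar>h u - h v\<bar> < 3N/4\<close> along edges, these colourings are cut out by cones of vertices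
  above x or, when y lies more than N/2 above x, below x and above y: no edge joins the latter two.

  For the circulant \<open>C\<^sub>m(R)\<close> the heights \<open>v * t mod m\<close> qualify as soon as \<open>d * t\<close> lies in the
  middle half modulo m for every \<open>d \<in> R\<close>. For \<open>C\<^sub>2\<^sub>n(a, b, n)\<close> with n odd, \<open>t = n\<close> works if a
  and b are odd. If \<open>a = 2a'\<close> and \<open>b = 2b'\<close>, a gcd argument and a discrete intermediate value
  argument give an odd t with \<open>a' t\<close> and \<open>b' t\<close> in the middle half modulo n, except when
  \<open>n = 5g\<close> and \<open>{a, b} = {2g, 4g}\<close>. That graph consists of g copies of the prism over \<open>K\<^sub>5\<close>,
  for which separating colourings are written down directly.\<close>

section \<open>Representing words built from step colourings\<close>

lemma alternate_iff_distinct_adj: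
  "alternate w x y \<longleftrightarrow> distinct_adj (filter (\<lambda>c. c = x \<or> c = y) w)"
  unfolding alternate_def Let_def distinct_adj_conv_nth by simp

lemma alternate_commute: "alternate w x y \<longleftrightarrow> alternate w y x"
  unfolding alternate_iff_distinct_adj by (simp add: disj_commute)

lemma distinct_adj_concat_replicate:
  "u \<noteq> v \<Longrightarrow> distinct_adj (concat (replicate k [u, v]))"
proof (induction k)
  case (Suc k)
  then show ?case by (cases k) auto
qed simp

lemma distinct_adj_concat_member:
  assumes "distinct_adj (concat xss)" "xs \<in> set xss"
  shows "distinct_adj xs"
proof -
  obtain as bs where "xss = as @ xs # bs" using split_list[OF assms(2)] by blast
  then show ?thesis using assms(1) by auto
qed

lemma filter_pair_sorted:
  fixes \<kappa> :: "'a \<Rightarrow> 'b::linorder"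
  assumes "sorted_wrt (\<lambda>x y. \<kappa> x < \<kappa> y) P" "u \<in> set P" "v \<in> set P" "\<kappa> u < \<kappa> v"
  shows "filter (\<lambda>c. c = u \<or> c = v) P = [u, v]"
proof -
  obtain as bs where P: "P = as @ u # bs" using split_list[OF assms(2)] by blast
  have as: "\<forall>x \<in> set as. \<kappa> x < \<kappa> u" and u_bs: "\<forall>x \<in> set bs. \<kappa> u < \<kappa> x"
    and bs_sorted: "sorted_wrt (\<lambda>x y. \<kappa> x < \<kappa> y) bs"
    using assms(1) unfolding P sorted_wrt_append by auto
  have "v \<notin> set as" using as assms(4) by (meson less_asym)
  have "v \<noteq> u" using assms(4) by auto
  then have "v \<in> set bs" using assms(3) \<open>v \<notin> set as\<close> unfolding P by auto
  then obtain cs ds where bs: "bs = cs @ v # ds" by (blast dest: split_list)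
  have cs: "\<forall>x \<in> set cs. \<kappa> x < \<kappa> v" and ds: "\<forall>x \<in> set ds. \<kappa> v < \<kappa> x"
    using bs_sorted unfolding bs sorted_wrt_append by auto
  have "filter (\<lambda>c. c = u \<or> c = v) as = []" using as assms(4) by (auto simp: filter_empty_conv)
  moreover have "filter (\<lambda>c. c = u \<or> c = v) cs = []"
    using cs u_bs unfolding bs by (auto simp: filter_empty_conv)
  moreover have "filter (\<lambda>c. c = u \<or> c = v) ds = []" using ds assms(4)
    by (auto simp: filter_empty_conv)
  ultimately show ?thesis using \<open>v \<noteq> u\<close> unfolding P bs by simp
qed

definition step_colouring :: "'a set \<Rightarrow> ('a \<Rightarrow> 'a \<Rightarrow> bool) \<Rightarrow> ('a \<Rightarrow> 'b::linorder) \<Rightarrow> ('a \<Rightarrow> nat) \<Rightarrow> bool"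
  where "step_colouring V E \<kappa> c \<longleftrightarrow> (\<forall>v\<in>V. c v \<le> 2) \<and>
    (\<forall>u\<in>V. \<forall>v\<in>V. E u v \<longrightarrow> \<kappa> u < \<kappa> v \<longrightarrow> c v = c u \<or> c v = Suc (c u))"

definition separates :: "('a \<Rightarrow> nat) \<Rightarrow> 'a \<Rightarrow> 'a \<Rightarrow> bool"
  where "separates c x y \<longleftrightarrow> (c x, c y) \<in> {(0, 2), (1, 0), (2, 1)}"

definition sweep :: "('a \<Rightarrow> nat) \<Rightarrow> 'a list \<Rightarrow> 'a list"
  where "sweep c P = filter (\<lambda>v. c v \<noteq> 2) P @ filter (\<lambda>v. c v \<noteq> 1) P @ filter (\<lambda>v. c v \<noteq> 0) P"

definition sweep_word :: "'a list \<Rightarrow> ('a \<Rightarrow> nat) list \<Rightarrow> 'a list"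
  where "sweep_word P cs = P @ concat (map (\<lambda>c. sweep c P) cs)"

lemma filter_sweep: "filter Q (sweep c P) = sweep c (filter Q P)"
  unfolding sweep_def by (simp add: filter_filter conj_commute)

lemma sweep_pair_step:
  assumes "u \<noteq> v" "c v \<le> 2" "c v = c u \<or> c v = Suc (c u)"
  shows "sweep c [u, v] = [u, v, u, v]"
proof -
  have "(c u, c v) \<in> {(0, 0), (0, 1), (1, 1), (1, 2), (2, 2)}" using assms(2,3) by auto
  then show ?thesis using assms(1) unfolding sweep_def by auto
qed

lemma sweep_pair_separates: "u \<noteq> v \<Longrightarrow> separates c u v \<Longrightarrow> \<not> distinct_adj (sweep c [u, v])"
  unfolding sweep_def separates_def by auto

context
  fixes \<kappa> :: "'a \<Rightarrow> 'b::linorder" and P :: "'a list" and u v :: 'a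
  assumes sorted: "sorted_wrt (\<lambda>x y. \<kappa> x < \<kappa> y) P"
    and pair: "u \<in> set P" "v \<in> set P" "\<kappa> u < \<kappa> v"
begin

lemma filter_sweep_word:
  "filter (\<lambda>c. c = u \<or> c = v) (sweep_word P cs) = [u, v] @ concat (map (\<lambda>c. sweep c [u, v]) cs)"
  using filter_pair_sorted[OF sorted pair] unfolding sweep_word_def
  by (simp add: filter_concat filter_sweep comp_def)

lemma alternate_sweep_word:
  assumes "\<forall>c \<in> set cs. c v \<le> 2 \<and> (c v = c u \<or> c v = Suc (c u))"
  shows "alternate (sweep_word P cs) u v"
proof -
  have "u \<noteq> v" using pair(3) by auto
  then have "sweep c [u, v] = [u, v, u, v]" if "c \<in> set cs" for c
    using assms that by (intro sweep_pair_step) auto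
  then have "filter (\<lambda>c. c = u \<or> c = v) (sweep_word P cs) =
      concat (replicate (Suc (2 * length cs)) [u, v])"
    unfolding filter_sweep_word by (induction cs) auto
  then show ?thesis
    unfolding alternate_iff_distinct_adj using distinct_adj_concat_replicate \<open>u \<noteq> v\<close> by metis
qed

lemma not_alternate_sweep_word:
  assumes "c \<in> set cs" "separates c u v"
  shows "\<not> alternate (sweep_word P cs) u v"
proof -
  have "\<not> distinct_adj (sweep c [u, v])" using assms(2) pair(3) by (intro sweep_pair_separates) auto
  then have "\<not> distinct_adj (concat (map (\<lambda>c. sweep c [u, v]) cs))"
    using assms(1) distinct_adj_concat_member by fastforce
  then show ?thesis unfolding alternate_iff_distinct_adj filter_sweep_word by blast
qed

end

theorem word_representable_if_separating_colourings:
  fixes \<kappa> :: "'a \<Rightarrow> 'b::linorder"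
  assumes "finite V" "inj_on \<kappa> V" "symp E"
    and "\<And>x y. x \<in> V \<Longrightarrow> y \<in> V \<Longrightarrow> \<not> E x y \<Longrightarrow> \<kappa> x < \<kappa> y \<Longrightarrow>
      \<exists>c. step_colouring V E \<kappa> c \<and> separates c x y"
  shows "word_representable V E"
proof -
  obtain xs where xs: "set xs = V" "distinct xs" using finite_distinct_list[OF assms(1)] by blast
  define P where "P = sort_key \<kappa> xs"
  have "distinct (map \<kappa> P)" unfolding P_def using xs assms(2) by (simp add: distinct_map)
  then have P: "set P = V" "sorted_wrt (\<lambda>x y. \<kappa> x < \<kappa> y) P"
    unfolding P_def using xs by (simp_all add: strict_sorted_iff flip: sorted_wrt_map)
  obtain C where C: "\<And>x y. x \<in> V \<Longrightarrow> y \<in> V \<Longrightarrow> \<not> E x y \<Longrightarrow> \<kappa> x < \<kappa> y \<Longrightarrow>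
      step_colouring V E \<kappa> (C x y) \<and> separates (C x y) x y"
    using assms(4) by metis
  define cs where
    "cs = map (\<lambda>(x, y). C x y) (filter (\<lambda>(x, y). \<not> E x y \<and> \<kappa> x < \<kappa> y) (List.product P P))"
  have "set cs \<subseteq> {c. step_colouring V E \<kappa> c}" unfolding cs_def using C P(1) by auto
  have alternate_if_edge: "alternate (sweep_word P cs) u v"
    if uv: "u \<in> V" "v \<in> V" "\<kappa> u < \<kappa> v" "E u v" for u v
    using \<open>set cs \<subseteq> _\<close> uv P(1)
    by (intro alternate_sweep_word[OF P(2)]) (auto simp: step_colouring_def)
  have colouring_listed: "C u v \<in> set cs" if uv: "u \<in> V" "v \<in> V" "\<kappa> u < \<kappa> v" "\<not> E u v" for u v
  proof -
    have "(u, v) \<in> set (filter (\<lambda>(x, y). \<not> E x y \<and> \<kappa> x < \<kappa> y) (List.product P P))"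
      using uv P(1) by simp
    then show ?thesis unfolding cs_def set_map by (rule rev_image_eqI) simp
  qed
  have edges: "E u v \<longleftrightarrow> alternate (sweep_word P cs) u v"
    if uv: "u \<in> V" "v \<in> V" "\<kappa> u < \<kappa> v" for u v
  proof (cases "E u v")
    case False
    then have "\<not> alternate (sweep_word P cs) u v"
      using C[OF uv(1,2) False uv(3)] uv P(1)
      by (intro not_alternate_sweep_word[OF P(2) _ _ _ colouring_listed]) auto
    then show ?thesis using False by blast
  qed (use alternate_if_edge uv in blast)
  have "E x y \<longleftrightarrow> alternate (sweep_word P cs) x y" if "x \<in> V" "y \<in> V" "x \<noteq> y" for x y
  proof -
    have "\<kappa> x \<noteq> \<kappa> y" using that inj_on_eq_iff[OF assms(2)] by blast
    then consider "\<kappa> x < \<kappa> y" | "\<kappa> y < \<kappa> x" by fastforce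
    then show ?thesis
    proof cases
      case 2
      then show ?thesis
        using edges[of y x] that alternate_commute[of _ x y] sympD[OF assms(3)] by blast
    qed (use edges that in blast)
  qed
  moreover have "set (sweep_word P cs) = V" unfolding sweep_word_def using P(1)
    by (auto simp: sweep_def)
  ultimately show ?thesis unfolding word_representable_def by blast
qed

lemma separating_step_colouring_bands:
  assumes "\<And>u v. u \<in> V \<Longrightarrow> v \<in> V \<Longrightarrow> E u v \<Longrightarrow> \<kappa> u < \<kappa> v \<Longrightarrow>
      (v \<in> D \<longrightarrow> u \<in> D) \<and> (u \<in> U \<longrightarrow> v \<in> U) \<and> \<not> (u \<in> D \<and> v \<in> U)"
    and "x \<notin> D \<and> x \<notin> U \<and> y \<in> D \<or> x \<in> D \<and> y \<notin> D \<and> y \<in> U"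
  shows "\<exists>c. step_colouring V E \<kappa> c \<and> separates c x y"
proof -
  define c where "c v = (if v \<in> D then 0 else if v \<in> U then 2 else 1 :: nat)" for v
  have "c v = c u \<or> c v = Suc (c u)" if "u \<in> V" "v \<in> V" "E u v" "\<kappa> u < \<kappa> v" for u v
    using assms(1)[OF that] unfolding c_def by auto
  then have "step_colouring V E \<kappa> c" unfolding step_colouring_def c_def by auto
  moreover have "separates c x y" using assms(2) unfolding separates_def c_def by auto
  ultimately show ?thesis by blast
qed

section \<open>Height functions\<close>

definition upper_cone :: "('a \<Rightarrow> 'a \<Rightarrow> bool) \<Rightarrow> ('a \<Rightarrow> int) \<Rightarrow> int \<Rightarrow> 'a \<Rightarrow> 'a set"
  where "upper_cone E h N x = {v. v = x \<or> (E x v \<and> h x < h v) \<or> N < 2 * (h v - h x)}"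

lemma upper_cone_far:
  assumes "\<forall>u\<in>V. \<forall>v\<in>V. E u v \<longrightarrow> N < 4 * \<bar>h u - h v\<bar>" "0 < N"
    and "x \<in> V" "u \<in> V" "u \<in> upper_cone E h N x"
  shows "u = x \<or> N < 4 * (h u - h x)"
proof -
  have "E x u \<Longrightarrow> N < 4 * \<bar>h x - h u\<bar>" using assms(1,3,4) by blast
  then show ?thesis using assms(2,5) unfolding upper_cone_def by auto
qed

lemma upper_cone_closed:
  assumes span: "\<forall>u\<in>V. \<forall>v\<in>V. E u v \<longrightarrow> N < 4 * \<bar>h u - h v\<bar>" and "0 < N"
    and "x \<in> V" "u \<in> V" "v \<in> V" "E u v" "h u < h v" "u \<in> upper_cone E h N x"
  shows "v \<in> upper_cone E h N x"
proof -
  have "N < 4 * \<bar>h u - h v\<bar>" using span assms(4-6) by blast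
  then show ?thesis
    using upper_cone_far[OF span assms(2,3,4,8)] assms(6,7) unfolding upper_cone_def by auto
qed

lemma separating_colouring_close:
  fixes h :: "'a \<Rightarrow> int" and \<kappa> :: "'a \<Rightarrow> 'b::linorder"
  assumes span: "\<forall>u\<in>V. \<forall>v\<in>V. E u v \<longrightarrow> N < 4 * \<bar>h u - h v\<bar>" and "0 < N"
    and arc: "\<And>u v. u \<in> V \<Longrightarrow> v \<in> V \<Longrightarrow> E u v \<Longrightarrow> \<kappa> u < \<kappa> v \<Longrightarrow> h u < h v"
    and "x \<in> V" "x \<noteq> y" "\<not> E x y" "2 * (h y - h x) \<le> N"
  shows "\<exists>c. step_colouring V E \<kappa> c \<and> separates c x y"
proof (rule separating_step_colouring_bands[where D = "- upper_cone E h N x" and U = "{}"])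
  fix u v assume uv: "u \<in> V" "v \<in> V" "E u v" "\<kappa> u < \<kappa> v"
  show "(v \<in> - upper_cone E h N x \<longrightarrow> u \<in> - upper_cone E h N x) \<and> (u \<in> {} \<longrightarrow> v \<in> {}) \<and>
      \<not> (u \<in> - upper_cone E h N x \<and> v \<in> {})"
    using upper_cone_closed[OF span \<open>0 < N\<close> \<open>x \<in> V\<close> uv(1-3) arc[OF uv]] by blast
qed (use assms(5-7) in \<open>auto simp: upper_cone_def\<close>)

lemma separating_colouring_distant:
  fixes h :: "'a \<Rightarrow> int" and \<kappa> :: "'a \<Rightarrow> 'b::linorder"
  assumes span: "\<And>u v. u \<in> V \<Longrightarrow> v \<in> V \<Longrightarrow> E u v \<Longrightarrow>
      N < 4 * \<bar>h u - h v\<bar> \<and> 4 * \<bar>h u - h v\<bar> < 3 * N"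
    and "0 < N" "symp E"
    and arc: "\<And>u v. u \<in> V \<Longrightarrow> v \<in> V \<Longrightarrow> E u v \<Longrightarrow> \<kappa> u < \<kappa> v \<Longrightarrow> h u < h v"
    and "x \<in> V" "y \<in> V" "x \<noteq> y" "\<not> E x y" "N < 2 * (h y - h x)"
  shows "\<exists>c. step_colouring V E \<kappa> c \<and> separates c x y"
proof -
  have up: "\<forall>u\<in>V. \<forall>v\<in>V. E u v \<longrightarrow> N < 4 * \<bar>h u - h v\<bar>"
    and down: "\<forall>u\<in>V. \<forall>v\<in>V. E u v \<longrightarrow> N < 4 * \<bar>- h u - - h v\<bar>"
    using span by (auto simp: abs_minus_commute)
  \<comment> \<open>the cone below x is the cone above x for the heights \<open>- h\<close>\<close>
  let ?J = "upper_cone E (\<lambda>v. - h v) N x" and ?I = "upper_cone E h N y"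
  show ?thesis
  proof (rule separating_step_colouring_bands[where D = ?J and U = ?I])
    fix u v assume uv: "u \<in> V" "v \<in> V" "E u v" "\<kappa> u < \<kappa> v"
    have "v \<in> ?J \<Longrightarrow> u \<in> ?J"
      using upper_cone_closed[OF down \<open>0 < N\<close> \<open>x \<in> V\<close> uv(2,1)] sympD[OF \<open>symp E\<close> uv(3)] arc[OF uv]
      by simp
    moreover have "u \<in> ?I \<Longrightarrow> v \<in> ?I"
      using upper_cone_closed[OF up \<open>0 < N\<close> \<open>y \<in> V\<close> uv(1-3)] arc[OF uv] by simp
    moreover have "\<not> (u \<in> ?J \<and> v \<in> ?I)"
    proof
      assume "u \<in> ?J \<and> v \<in> ?I"
      then have "u = x \<or> N < 4 * (h x - h u)" "v = y \<or> N < 4 * (h v - h y)"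
        using upper_cone_far[OF down \<open>0 < N\<close> \<open>x \<in> V\<close> uv(1)]
          upper_cone_far[OF up \<open>0 < N\<close> \<open>y \<in> V\<close> uv(2)] by auto
      then show False using span[OF uv(1-3)] arc[OF uv] assms(8,9) \<open>E u v\<close> by auto
    qed
    ultimately show "(v \<in> ?J \<longrightarrow> u \<in> ?J) \<and> (u \<in> ?I \<longrightarrow> v \<in> ?I) \<and> \<not> (u \<in> ?J \<and> v \<in> ?I)"
      by blast
  qed (use assms(2,3,7-9) in \<open>auto simp: upper_cone_def dest: sympD\<close>)
qed

theorem word_representable_if_height:
  fixes h :: "'a \<Rightarrow> int"
  assumes "finite V" "symp E" "0 < N"
    and span: "\<And>u v. u \<in> V \<Longrightarrow> v \<in> V \<Longrightarrow> E u v \<Longrightarrow>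
      N < 4 * \<bar>h u - h v\<bar> \<and> 4 * \<bar>h u - h v\<bar> < 3 * N"
  shows "word_representable V E"
proof -
  obtain \<iota> :: "'a \<Rightarrow> nat" where "inj_on \<iota> V" using finite_imp_inj_to_nat_seg[OF assms(1)] by blast
  define \<kappa> where "\<kappa> v = (h v, \<iota> v)" for v
  have "inj_on \<kappa> V" using \<open>inj_on \<iota> V\<close> unfolding \<kappa>_def inj_on_def by simp
  have arc: "h u < h v" if "u \<in> V" "v \<in> V" "E u v" "\<kappa> u < \<kappa> v" for u v
    using span[OF that(1-3)] that(4) \<open>0 < N\<close> unfolding \<kappa>_def less_prod_def by auto
  have "\<forall>u\<in>V. \<forall>v\<in>V. E u v \<longrightarrow> N < 4 * \<bar>h u - h v\<bar>" using span by blast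
  show ?thesis
  proof (rule word_representable_if_separating_colourings[OF assms(1) \<open>inj_on \<kappa> V\<close> assms(2)])
    fix x y assume "x \<in> V" "y \<in> V" "\<not> E x y" "\<kappa> x < \<kappa> y"
    then have "x \<noteq> y" by auto
    then show "\<exists>c. step_colouring V E \<kappa> c \<and> separates c x y"
      using separating_colouring_close[OF \<open>\<forall>u\<in>V. _\<close> \<open>0 < N\<close> arc \<open>x \<in> V\<close>]
        separating_colouring_distant[OF span \<open>0 < N\<close> assms(2) arc \<open>x \<in> V\<close> \<open>y \<in> V\<close>]
        \<open>\<not> E x y\<close> by fastforce
  qed
qed

section \<open>Circulant graphs\<close>

definition middle_half :: "int \<Rightarrow> int \<Rightarrow> bool"
  where "middle_half q x \<longleftrightarrow> q < 4 * (x mod q) \<and> 4 * (x mod q) < 3 * q"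

lemma middle_half_pos: "middle_half q x \<Longrightarrow> 0 < q"
  unfolding middle_half_def by linarith

lemma middle_halfI: "q < 4 * z \<Longrightarrow> 4 * z < 3 * q \<Longrightarrow> middle_half q z"
  unfolding middle_half_def by simp

lemma middle_half_cong: "q dvd x - y \<Longrightarrow> middle_half q x \<longleftrightarrow> middle_half q y"
  unfolding middle_half_def by (simp add: mod_eq_dvd_iff[symmetric])

lemma middle_half_uminus [simp]: "middle_half q (- x) \<longleftrightarrow> middle_half q x"
proof -
  have "middle_half q (- x)" if "middle_half q x" for x
  proof -
    have "x mod q \<noteq> 0" "0 < q" using that middle_half_pos unfolding middle_half_def by auto
    then have "(- x) mod q = q - x mod q" by (simp add: zmod_zminus1_eq_if)
    with that show ?thesis unfolding middle_half_def by simp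
  qed
  from this[of x] this[of "- x"] show ?thesis by auto
qed

lemma middle_half_mult_cancel: "0 < g \<Longrightarrow> middle_half (g * q) (g * x) \<longleftrightarrow> middle_half q x"
  unfolding middle_half_def by (simp add: mult.left_commute[of 4 g] mult.left_commute[of 3 g])

lemma middle_half_diff_bounds:
  fixes x y q :: int
  assumes "0 \<le> x" "x < q" "0 \<le> y" "y < q" "middle_half q (x - y)"
  shows "q < 4 * \<bar>x - y\<bar> \<and> 4 * \<bar>x - y\<bar> < 3 * q"
proof (cases "y \<le> x")
  case True
  then have "(x - y) mod q = x - y" using assms by (intro mod_pos_pos_trivial) auto
  then show ?thesis using assms(5) True unfolding middle_half_def by simp
next
  case False
  have "(x - y) mod q = (x - y + q) mod q" by simp
  also have "\<dots> = x - y + q" using assms False by (intro mod_pos_pos_trivial) auto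
  finally show ?thesis using assms(5) False unfolding middle_half_def by simp
qed

lemma symp_circulant_adj: "symp (circulant_adj m R)"
  unfolding symp_def circulant_adj_def circ_dist_def by (auto simp: Let_def)

lemma circ_dist_cong:
  assumes "i < m" "j < m"
  shows "int m dvd (int i - int j) - int (circ_dist m i j) \<or>
    int m dvd (int i - int j) + int (circ_dist m i j)"
proof -
  have "(int i - int j) - int (circ_dist m i j) \<in> {0, int m, - int m} \<or>
        (int i - int j) + int (circ_dist m i j) \<in> {0, int m, - int m}"
    using assms unfolding circ_dist_def Let_def by (auto simp: min_def of_nat_diff)
  then show ?thesis by auto
qed

theorem word_representable_circulant:
  fixes t :: int
  assumes "0 < m" and middle: "\<And>d. d \<in> R \<Longrightarrow> middle_half (int m) (int d * t)"
  shows "word_representable {0..<m} (circulant_adj m R)"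
proof (rule word_representable_if_height[where h = "\<lambda>v. int v * t mod int m" and N = "int m"])
  fix u v assume u: "u \<in> {0..<m}" and v: "v \<in> {0..<m}" and "circulant_adj m R u v"
  define d where "d = circ_dist m u v"
  define x where "x = int u * t mod int m - int v * t mod int m"
  have x: "int m dvd x - (int u - int v) * t"
    using mod_diff_eq[of "int u * t" "int m" "int v * t"] unfolding x_def
    by (simp add: mod_eq_dvd_iff left_diff_distrib)
  have "int m dvd ((int u - int v) - int d) * t \<or> int m dvd ((int u - int v) + int d) * t"
    using circ_dist_cong[of u m v] u v unfolding d_def by auto
  then have "middle_half (int m) x = middle_half (int m) (int d * t) \<or>
      middle_half (int m) x = middle_half (int m) (- (int d * t))"
  proof (elim disjE)
    assume "int m dvd ((int u - int v) - int d) * t"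
    from dvd_add[OF x this] show ?thesis by (simp add: middle_half_cong algebra_simps)
  next
    assume "int m dvd ((int u - int v) + int d) * t"
    from dvd_add[OF x this] have "int m dvd x - (- (int d * t))" by (simp add: algebra_simps)
    then show ?thesis using middle_half_cong by blast
  qed
  moreover have "middle_half (int m) (int d * t)" using middle \<open>circulant_adj m R u v\<close>
    unfolding circulant_adj_def d_def by blast
  ultimately have "middle_half (int m) x" by auto
  then show "int m < 4 * \<bar>int u * t mod int m - int v * t mod int m\<bar> \<and>
      4 * \<bar>int u * t mod int m - int v * t mod int m\<bar> < 3 * int m"
    using \<open>0 < m\<close> unfolding x_def by (intro middle_half_diff_bounds) auto
qed (use \<open>0 < m\<close> symp_circulant_adj in auto)

lemma middle_half_odd_mult:
  fixes n x :: int
  assumes "0 < n" "odd x"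
  shows "middle_half (2 * n) (x * n)"
proof -
  obtain y where "x = 2 * y + 1" using assms(2) by (rule oddE)
  then have "x * n = n + y * (2 * n)" by (simp add: algebra_simps)
  then have "x * n mod (2 * n) = n" using assms(1) by simp
  then show ?thesis using assms(1) unfolding middle_half_def by simp
qed

lemma word_representable_circulant_odd_jumps:
  assumes "0 < n" "\<forall>d \<in> R. odd d"
  shows "word_representable {0..<2 * n} (circulant_adj (2 * n) R)"
  using assms middle_half_odd_mult[of "int n"]
  by (intro word_representable_circulant[where t = "int n"]) auto

lemma word_representable_circulant_even_jumps:
  fixes n a b :: nat and s :: int
  assumes "odd n" "middle_half (int n) (int a * s)" "middle_half (int n) (int b * s)"
  shows "word_representable {0..<2 * n} (circulant_adj (2 * n) {2 * a, 2 * b, n})"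
proof -
  define t where "t = (if odd s then s else s + int n)"
  have "odd t" "int n dvd t - s" unfolding t_def using assms(1) by auto
  have "0 < n" using assms(1) by (rule odd_pos)
  have double: "middle_half (int (2 * n)) (int (2 * e) * t)"
    if "middle_half (int n) (int e * s)" for e
  proof -
    have "int n dvd int e * t - int e * s" using \<open>int n dvd t - s\<close>
      by (simp add: right_diff_distrib[symmetric])
    then have "middle_half (int n) (int e * t)" using that middle_half_cong by blast
    then show ?thesis using middle_half_mult_cancel[of 2 "int n" "int e * t"]
      by (simp add: mult.assoc)
  qed
  show ?thesis
  proof (rule word_representable_circulant[where t = t])
    fix d assume "d \<in> {2 * a, 2 * b, n}"
    then show "middle_half (int (2 * n)) (int d * t)"
      using double assms(2,3) middle_half_odd_mult[OF _ \<open>odd t\<close>, of "int n"] \<open>0 < n\<close>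
      by (auto simp: mult.commute)
  qed (use \<open>0 < n\<close> in simp)
qed

section \<open>Multipliers in the middle half\<close>

lemma middle_half_window:
  fixes q z :: int
  assumes "odd q" "q div 4 < z" "z \<le> q div 4 + (q - 1) div 2"
  shows "middle_half q z"
proof (rule middle_halfI)
  have "2 * ((q - 1) div 2) = q - 1" using assms(1) by (simp add: odd_two_times_div_two_nat)
  moreover have "q = 4 * (q div 4) + q mod 4" "0 \<le> q mod 4" "q mod 4 < 4" by simp_all
  ultimately show "q < 4 * z" "4 * z < 3 * q" using assms(2,3) by linarith+
qed

lemma multiple_in_window:
  fixes c w L A :: int
  assumes "0 < c" "c \<le> w" "c * L \<le> A" "A \<le> c * (L + w - 1)"
  shows "\<exists>j. L \<le> j \<and> j < L + w \<and> A \<le> c * j \<and> c * j < A + w"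
proof -
  define j where "j = (A + c - 1) div c"
  have "c * j + (A + c - 1) mod c = A + c - 1" "0 \<le> (A + c - 1) mod c" "(A + c - 1) mod c < c"
    unfolding j_def using assms(1) by simp_all
  then have cj: "A \<le> c * j" "c * j \<le> A + c - 1" by linarith+
  have "c * L < c * (j + 1)" "c * j < c * (L + w)" using assms(3,4) cj by (auto simp: algebra_simps)
  then have "L \<le> j" "j < L + w" using assms(1) by (simp_all add: mult_less_cancel_left)
  then show ?thesis using cj assms(2) by auto
qed

text \<open>The multiples \<open>c * j\<close>, j running through a window of width \<open>w \<ge> c\<close> inside the middle half,
  advance in steps of c and therefore cannot jump over a translate of that window.\<close>

lemma middle_half_multiple:
  fixes q c :: int
  assumes "7 \<le> q" "odd q" "2 \<le> c" "2 * c < q"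
  shows "\<exists>j. middle_half q j \<and> middle_half q (c * j)"
proof -
  define w where "w = (q - 1) div 2"
  define L where "L = q div 4 + 1"
  have "2 * w = q - 1" unfolding w_def using assms(2) by (simp add: odd_two_times_div_two_nat)
  then have "3 \<le> w" "c \<le> w" using assms by linarith+
  have window: "middle_half q z" if "L \<le> z" "z < L + w" for z
    using that assms(2) unfolding L_def w_def by (intro middle_half_window) auto
  define r where "r = (c * L - L) mod q"
  have r: "0 \<le> r" "r < q" "q dvd c * L - L - r"
    using assms(1) unfolding r_def by (auto simp: mod_eq_dvd_iff[symmetric])
  show ?thesis
  proof (cases "r < w")
    case True
    have "middle_half q (L + r)" using window True r by auto
    then have "middle_half q (c * L)"
      using r(3) middle_half_cong[of q "c * L" "L + r"] by (simp add: algebra_simps)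
    moreover have "middle_half q L" using window \<open>3 \<le> w\<close> by simp
    ultimately show ?thesis by blast
  next
    case False
    define A where "A = c * L + (q - r)"
    have "q dvd A - L" using dvd_add[OF r(3) dvd_refl[of q]] unfolding A_def
      by (simp add: algebra_simps)
    have "2 * (w - 1) \<le> c * (w - 1)" using assms(3) \<open>3 \<le> w\<close> by (intro mult_right_mono) auto
    then have "q - r \<le> c * (w - 1)" using False \<open>2 * w = q - 1\<close> \<open>3 \<le> w\<close> by (smt (verit))
    then obtain j where j: "L \<le> j" "j < L + w" "A \<le> c * j" "c * j < A + w"
      using multiple_in_window[of c w L A] assms(3) \<open>c \<le> w\<close> r(2) unfolding A_def
      by (auto simp: algebra_simps)
    have "middle_half q (L + (c * j - A))" using window j(3,4) by auto
    moreover have "q dvd c * j - (L + (c * j - A))" using \<open>q dvd A - L\<close> by (simp add: algebra_simps)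
    ultimately have "middle_half q (c * j)" using middle_half_cong by blast
    then show ?thesis using window j(1,2) by blast
  qed
qed

lemma proper_divisor_le:
  fixes n e :: int
  assumes "odd n" "0 < n" "e dvd n" "0 < e" "e \<noteq> n"
  shows "e \<le> (n - 1) div 2"
proof -
  obtain k where k: "n = e * k" using assms(3) by blast
  then have "odd k" "0 < k" "k \<noteq> 1" using assms by (auto simp: zero_less_mult_iff)
  then have "3 \<le> k" by presburger
  then have "3 * e \<le> n" using k assms(4) by simp
  moreover have "2 * ((n - 1) div 2) = n - 1" using assms(1)
    by (simp add: odd_two_times_div_two_nat)
  ultimately show ?thesis using assms(4) by linarith
qed

lemma middle_half_coset:
  fixes n e x :: int
  assumes "odd n" "0 < n" "e dvd n" "0 < e" "e \<noteq> n"
  shows "\<exists>z. middle_half n z \<and> e dvd z - x"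
proof -
  define z where "z = n div 4 + 1 + (x - (n div 4 + 1)) mod e"
  have "0 \<le> (x - (n div 4 + 1)) mod e" "(x - (n div 4 + 1)) mod e < e" using assms(4) by simp_all
  then have "middle_half n z"
    unfolding z_def using proper_divisor_le[OF assms] assms(1)
    by (intro middle_half_window) linarith+
  moreover have "e dvd z - x" unfolding z_def
    by (simp add: mod_eq_dvd_iff[symmetric] mod_add_right_eq)
  ultimately show ?thesis by blast
qed

text \<open>With \<open>g = gcd \<alpha> n\<close> and \<open>n = g * q\<close>, fixing s modulo q fixes \<open>\<alpha> * s\<close> modulo n; the
  remaining freedom \<open>s + q * k\<close> moves \<open>\<beta> * s\<close> through a whole coset of the proper divisor
  \<open>gcd (\<beta> * q) n\<close> of n.\<close>

lemma middle_multiplier_if_not_dvd_gcd: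
  fixes n \<alpha> \<beta> :: int
  assumes "odd n" "0 < n" "\<not> n dvd \<alpha>" "\<not> gcd \<alpha> n dvd \<beta>"
  shows "\<exists>s. middle_half n (\<alpha> * s) \<and> middle_half n (\<beta> * s)"
proof -
  define g where "g = gcd \<alpha> n"
  define q where "q = n div g"
  have "0 < g" "n = g * q" unfolding g_def q_def using assms(2) by auto
  then have "0 < q" using assms(2) zero_less_mult_pos[of g q] by simp
  have "g \<noteq> n" using assms(3) gcd_dvd1 unfolding g_def by metis
  have "odd q" using assms(1) \<open>n = g * q\<close> by simp
  moreover have "q \<noteq> 1" using \<open>g \<noteq> n\<close> \<open>n = g * q\<close> by auto
  ultimately have "3 \<le> q" using \<open>0 < q\<close> by presburger
  have "n dvd \<alpha> * q"
    using \<open>n = g * q\<close> unfolding g_def by (metis gcd_dvd1 mult.commute mult_dvd_mono dvd_refl)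
  define j0 where "j0 = (q - 1) div 2"
  have "middle_half q j0"
    unfolding j0_def using \<open>odd q\<close> \<open>3 \<le> q\<close> by (intro middle_half_window) presburger+
  then have "middle_half n (g * j0)" using middle_half_mult_cancel[OF \<open>0 < g\<close>] \<open>n = g * q\<close> by simp
  obtain s0 where s0: "[\<alpha> * s0 = g * j0] (mod n)"
    using cong_solve_dvd_int[of \<alpha> n "g * j0"] unfolding g_def by auto
  define e where "e = gcd (\<beta> * q) n"
  have "n dvd \<beta> * q \<longleftrightarrow> g dvd \<beta>" unfolding \<open>n = g * q\<close> using \<open>0 < q\<close> by simp
  then have "e \<noteq> n" using assms(4) unfolding e_def g_def by (metis gcd_dvd1)
  moreover have "0 < e" "e dvd n" unfolding e_def using assms(2) by simp_all
  ultimately obtain z where z: "middle_half n z" "e dvd z - \<beta> * s0"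
    using middle_half_coset[OF assms(1,2)] by blast
  obtain k where k: "[\<beta> * q * k = z - \<beta> * s0] (mod n)"
    using cong_solve_dvd_int[of "\<beta> * q" n "z - \<beta> * s0"] z(2) unfolding e_def by auto
  define s where "s = s0 + q * k"
  have "n dvd (\<alpha> * s0 - g * j0) + \<alpha> * q * k"
    using s0 \<open>n dvd \<alpha> * q\<close> by (simp add: cong_iff_dvd_diff)
  then have "n dvd \<alpha> * s - g * j0" unfolding s_def by (simp add: algebra_simps)
  moreover have "n dvd \<beta> * s - z"
    using k unfolding s_def by (simp add: cong_iff_dvd_diff algebra_simps)
  ultimately show ?thesis using \<open>middle_half n (g * j0)\<close> z(1) middle_half_cong by blast
qed

lemma middle_multiplier_coprime:
  fixes q \<alpha> \<beta> :: int
  assumes "odd q" "0 < q" "q \<noteq> 5" "coprime \<alpha> q"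
    and "\<not> q dvd \<beta>" "\<not> q dvd \<beta> - \<alpha>" "\<not> q dvd \<beta> + \<alpha>"
  shows "\<exists>s. middle_half q (\<alpha> * s) \<and> middle_half q (\<beta> * s)"
proof -
  obtain u where u: "[\<alpha> * u = 1] (mod q)" using cong_solve_coprime_int[OF assms(4)] by blast
  define \<gamma> where "\<gamma> = \<beta> * u mod q"
  have \<gamma>: "0 \<le> \<gamma>" "\<gamma> < q" unfolding \<gamma>_def using assms(2) by simp_all
  have "[\<beta> * u = \<gamma>] (mod q)" unfolding \<gamma>_def by simp
  have "[\<beta> = \<beta> * (\<alpha> * u)] (mod q)" using cong_scalar_left[OF u, of \<beta>] by (simp add: cong_sym_eq)
  also have "[\<beta> * (\<alpha> * u) = \<gamma> * \<alpha>] (mod q)"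
    using cong_scalar_right[OF \<open>[\<beta> * u = \<gamma>] (mod q)\<close>, of \<alpha>] by (simp add: ac_simps)
  finally have "q dvd \<beta> - \<gamma> * \<alpha>" by (simp add: cong_iff_dvd_diff)
  then have "\<gamma> \<noteq> 0" "\<gamma> \<noteq> 1" "\<gamma> \<noteq> q - 1"
    using assms(5-7) dvd_add[of q "\<beta> - (q - 1) * \<alpha>" "q * \<alpha>"] by (auto simp: algebra_simps)
  \<comment> \<open>\<open>\<beta> \<equiv> \<gamma> * \<alpha>\<close> with \<open>\<gamma> \<notin> {0, 1, -1}\<close>; for \<open>q = 5\<close> no j has j and \<open>2 * j\<close> in the middle half\<close>
  define c where "c = min \<gamma> (q - \<gamma>)"
  have "2 \<le> c" "2 * c < q" using \<gamma> \<open>\<gamma> \<noteq> 0\<close> \<open>\<gamma> \<noteq> 1\<close> \<open>\<gamma> \<noteq> q - 1\<close> assms(1) unfolding c_def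
    by presburger+
  then have "7 \<le> q" using assms(1,3) by presburger
  then obtain j where j: "middle_half q j" "middle_half q (c * j)"
    using middle_half_multiple[OF _ assms(1) \<open>2 \<le> c\<close> \<open>2 * c < q\<close>] by blast
  have "middle_half q (\<gamma> * j)"
  proof (cases "c = \<gamma>")
    case False
    then have "c = q - \<gamma>" unfolding c_def by (auto simp: min_def)
    then have "\<gamma> * j - - (c * j) = q * j" by (simp add: ring_distribs)
    then have "q dvd \<gamma> * j - - (c * j)" by simp
    then show ?thesis using j(2) middle_half_cong by fastforce
  qed (use j in simp)
  moreover have "q dvd \<alpha> * (u * j) - j" "q dvd \<beta> * (u * j) - \<gamma> * j"
    using cong_scalar_right[OF u, of j] cong_scalar_right[OF \<open>[\<beta> * u = \<gamma>] (mod q)\<close>, of j]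
    by (simp_all add: cong_iff_dvd_diff ac_simps)
  ultimately show ?thesis using j(1) middle_half_cong by blast
qed

lemma middle_multiplier_same_gcd:
  fixes n \<alpha> \<beta> :: int
  assumes "odd n" "0 < n" "gcd \<beta> n = gcd \<alpha> n" "n \<noteq> 5 * gcd \<alpha> n"
    and "\<not> n dvd \<beta>" "\<not> n dvd \<beta> - \<alpha>" "\<not> n dvd \<beta> + \<alpha>"
  shows "\<exists>s. middle_half n (\<alpha> * s) \<and> middle_half n (\<beta> * s)"
proof -
  define g where "g = gcd \<alpha> n"
  obtain \<alpha>' \<beta>' q where \<alpha>': "\<alpha> = g * \<alpha>'" and \<beta>': "\<beta> = g * \<beta>'" and q: "n = g * q"
    using assms(3) unfolding g_def by (metis gcd_dvd1 gcd_dvd2 dvdE)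
  have "0 < g" unfolding g_def using assms(2) by simp
  then have "0 < q" using assms(2) q zero_less_mult_pos by blast
  have "g * gcd \<alpha>' q = g" using gcd_mult_distrib_int[of g \<alpha>' q] \<open>0 < g\<close> \<alpha>' q unfolding g_def by simp
  then have "coprime \<alpha>' q" using \<open>0 < g\<close> by (simp add: coprime_iff_gcd_eq_1)
  have "\<not> q dvd x" if "\<not> n dvd g * x" for x using that q by simp
  then have "\<not> q dvd \<beta>'" "\<not> q dvd \<beta>' - \<alpha>'" "\<not> q dvd \<beta>' + \<alpha>'"
    using assms(5-7) \<alpha>' \<beta>' by (simp_all add: algebra_simps)
  moreover have "odd q" using assms(1) q by simp
  moreover have "q \<noteq> 5" using assms(4) q unfolding g_def by auto
  ultimately obtain s where "middle_half q (\<alpha>' * s)" "middle_half q (\<beta>' * s)"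
    using middle_multiplier_coprime[OF _ \<open>0 < q\<close> _ \<open>coprime \<alpha>' q\<close>] by blast
  then have "middle_half n (\<alpha> * s)" "middle_half n (\<beta> * s)"
    using middle_half_mult_cancel[OF \<open>0 < g\<close>, of q] unfolding q \<alpha>' \<beta>' by (simp_all add: mult.assoc)
  then show ?thesis by blast
qed

lemma middle_multiplier_exists:
  fixes n \<alpha> \<beta> :: int
  assumes "odd n" "0 < n" "\<not> n dvd \<alpha>" "\<not> n dvd \<beta>" "\<not> n dvd \<alpha> - \<beta>" "\<not> n dvd \<alpha> + \<beta>"
  shows "(\<exists>s. middle_half n (\<alpha> * s) \<and> middle_half n (\<beta> * s)) \<or>
    (\<exists>g. n = 5 * g \<and> g dvd \<alpha> \<and> g dvd \<beta>)"
proof -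
  have "gcd \<beta> n = gcd \<alpha> n" if "gcd \<alpha> n dvd \<beta>" "gcd \<beta> n dvd \<alpha>"
    using that by (simp add: gcd_greatest zdvd_antisym_nonneg)
  then consider "\<not> gcd \<alpha> n dvd \<beta>" | "\<not> gcd \<beta> n dvd \<alpha>" | "gcd \<beta> n = gcd \<alpha> n" by blast
  then show ?thesis
  proof cases
    case 1
    then show ?thesis using middle_multiplier_if_not_dvd_gcd[OF assms(1-3)] by blast
  next
    case 2
    then show ?thesis using middle_multiplier_if_not_dvd_gcd[OF assms(1,2,4)] by blast
  next
    case 3
    show ?thesis
    proof (cases "n = 5 * gcd \<alpha> n")
      case True
      then show ?thesis using 3 by (metis gcd_dvd1)
    next
      case False
      then show ?thesis
        using middle_multiplier_same_gcd[OF assms(1,2) 3 False assms(4)] assms(5,6)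
        by (simp add: dvd_diff_commute add.commute)
    qed
  qed
qed

lemma not_dvd_small_combinations:
  fixes a b n :: nat
  assumes "0 < a" "0 < b" "2 * a < n" "2 * b < n" "a \<noteq> b"
  shows "\<not> int n dvd int a" "\<not> int n dvd int b"
    "\<not> int n dvd int a - int b" "\<not> int n dvd int a + int b"
proof -
  have not_dvd: "\<not> int n dvd x" if "0 < \<bar>x\<bar>" "\<bar>x\<bar> < int n" for x
    using zdvd_not_zless[OF that] by simp
  show "\<not> int n dvd int a" "\<not> int n dvd int b"
    "\<not> int n dvd int a - int b" "\<not> int n dvd int a + int b"
    using assms by (intro not_dvd; simp)+
qed

section \<open>The prism over \<open>K\<^sub>5\<close>\<close>

text \<open>The circulant \<open>C\<^sub>1\<^sub>0(2, 4, 5)\<close> is the prism over \<open>K\<^sub>5\<close>: the even and the odd residues each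
  span a \<open>K\<^sub>5\<close>, and \<open>i \<mapsto> i + 5\<close> matches them. \<open>prism_position\<close> numbers its vertices so that
  the two copies of \<open>K\<^sub>5\<close> occupy positions 0 to 4 and 5 to 9, and p is matched with \<open>p + 5\<close>.\<close>

definition prism_position :: "nat \<Rightarrow> nat"
  where "prism_position i = (if even i then i div 2 else 5 + ((i + 5) mod 10) div 2)"

definition prism_adj :: "nat \<Rightarrow> nat \<Rightarrow> bool"
  where "prism_adj p p' \<longleftrightarrow> p \<noteq> p' \<and> ((p < 5 \<longleftrightarrow> p' < 5) \<or> p' = p + 5 \<or> p = p' + 5)"

lemma less_10_cases:
  "(i::nat) < 10 \<Longrightarrow> i = 0 \<or> i = 1 \<or> i = 2 \<or> i = 3 \<or> i = 4 \<or> i = 5 \<or> i = 6 \<or> i = 7 \<or> i = 8 \<or> i = 9"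
  by presburger

lemma prism_position_inj:
  assumes "i < 10" "j < 10" "prism_position i = prism_position j"
  shows "i = j"
  using less_10_cases[OF assms(1)] less_10_cases[OF assms(2)] assms(3)
  by (elim disjE) (simp_all add: prism_position_def)

lemma prism_adj_prism_position:
  assumes "i < 10" "j < 10"
  shows "\<bar>int i - int j\<bar> \<in> {2, 4, 5, 6, 8} \<longleftrightarrow> prism_adj (prism_position i) (prism_position j)"
  using less_10_cases[OF assms(1)] less_10_cases[OF assms(2)]
  by (elim disjE) (simp_all add: prism_position_def prism_adj_def)

lemma abs_diff_eq_mult_iff:
  fixes u v k m :: nat
  assumes "0 < k"
  shows "\<bar>int u - int v\<bar> = int (m * k) \<longleftrightarrow>
    u mod k = v mod k \<and> \<bar>int (u div k) - int (v div k)\<bar> = int m"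
proof
  assume *: "\<bar>int u - int v\<bar> = int (m * k)"
  then have "int k dvd int u - int v" by (metis dvd_abs_iff dvd_triv_right of_nat_mult)
  then have "u mod k = v mod k" by (simp add: mod_eq_dvd_iff[symmetric] flip: of_nat_mod)
  moreover have
    "int u - int v = int k * (int (u div k) - int (v div k)) + (int (u mod k) - int (v mod k))"
    by (simp add: algebra_simps flip: of_nat_mult of_nat_add)
  ultimately show "u mod k = v mod k \<and> \<bar>int (u div k) - int (v div k)\<bar> = int m"
    using * assms by (simp add: abs_mult)
next
  assume *: "u mod k = v mod k \<and> \<bar>int (u div k) - int (v div k)\<bar> = int m"
  have "int u - int v = int k * (int (u div k) - int (v div k)) + (int (u mod k) - int (v mod k))"
    by (simp add: algebra_simps flip: of_nat_mult of_nat_add)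
  then show "\<bar>int u - int v\<bar> = int (m * k)" using * by (simp add: abs_mult)
qed

lemma circulant_prism_adj:
  assumes "0 < k" "u < 10 * k" "v < 10 * k"
  shows "circulant_adj (10 * k) {2 * k, 4 * k, 5 * k} u v \<longleftrightarrow>
    u mod k = v mod k \<and> prism_adj (prism_position (u div k)) (prism_position (v div k))"
proof -
  have "circulant_adj (10 * k) {2 * k, 4 * k, 5 * k} u v \<longleftrightarrow>
      (\<exists>m \<in> {2, 4, 5, 6, 8}. \<bar>int u - int v\<bar> = int (m * k))"
    using assms unfolding circulant_adj_def circ_dist_def Let_def by (auto simp: min_def)
  also have "\<dots> \<longleftrightarrow> u mod k = v mod k \<and> \<bar>int (u div k) - int (v div k)\<bar> \<in> {2, 4, 5, 6, 8}"
    using abs_diff_eq_mult_iff[OF assms(1)] by auto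
  also have "\<dots> \<longleftrightarrow>
      u mod k = v mod k \<and> prism_adj (prism_position (u div k)) (prism_position (v div k))"
    using prism_adj_prism_position less_mult_imp_div_less assms(2,3) by blast
  finally show ?thesis .
qed

definition prism_key :: "nat \<Rightarrow> nat \<Rightarrow> nat \<times> nat"
  where "prism_key k v = (v mod k, prism_position (v div k))"

lemma inj_on_prism_key: "inj_on (prism_key k) {0..<10 * k}"
proof (rule inj_onI)
  fix u v assume "u \<in> {0..<10 * k}" "v \<in> {0..<10 * k}" "prism_key k u = prism_key k v"
  then have "u div k = v div k" "u mod k = v mod k"
    using prism_position_inj less_mult_imp_div_less unfolding prism_key_def by auto
  then show "u = v" by (metis div_mult_mod_eq)
qed

theorem word_representable_circulant_prism:
  assumes "0 < k"
  shows "word_representable {0..<10 * k} (circulant_adj (10 * k) {2 * k, 4 * k, 5 * k})"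
proof -
  let ?V = "{0..<10 * k}" and ?E = "circulant_adj (10 * k) {2 * k, 4 * k, 5 * k}"
  define P where "P v = prism_position (v div k)" for v
  have key: "prism_key k v = (v mod k, P v)" for v unfolding prism_key_def P_def ..
  have E: "?E u v \<longleftrightarrow> u mod k = v mod k \<and> prism_adj (P u) (P v)" if "u \<in> ?V" "v \<in> ?V" for u v
    using circulant_prism_adj[OF assms] that unfolding P_def by simp
  have arc: "u mod k = v mod k \<and> P u < P v \<and> prism_adj (P u) (P v)"
    if "u < 10 * k" "v < 10 * k" "?E u v" "prism_key k u < prism_key k v" for u v
    using E[of u v] that unfolding key by auto
  show ?thesis
  proof (rule word_representable_if_separating_colourings[OF _ inj_on_prism_key symp_circulant_adj])
    fix x y assume x: "x \<in> ?V" and y: "y \<in> ?V" and "\<not> ?E x y" and "prism_key k x < prism_key k y"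
    have "P x < P y \<and> \<not> prism_adj (P x) (P y)" if "x mod k = y mod k"
      using that E[OF x y] \<open>\<not> ?E x y\<close> \<open>prism_key k x < prism_key k y\<close> unfolding key by auto
    then consider (other) "x mod k \<noteq> y mod k"
      | (far) "x mod k = y mod k" "P x < 5" "P x + 5 < P y"
      | (near) "x mod k = y mod k" "P x < 5" "5 \<le> P y" "P y < P x + 5"
      unfolding prism_adj_def by fastforce
    then show "\<exists>c. step_colouring ?V ?E (prism_key k) c \<and> separates c x y"
    proof cases
      case other
      show ?thesis
        by (rule separating_step_colouring_bands[where D = "{v. v mod k \<noteq> x mod k}" and U = "{}"])
          (use other in \<open>auto dest: arc\<close>)
    next
      case far
      show ?thesis
        by (rule separating_step_colouring_bands[where D = "{v. v mod k = x mod k \<and> P v \<le> P x}"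
              and U = "{v. v mod k = x mod k \<and> P y \<le> P v}"])
          (use far in \<open>auto simp: prism_adj_def dest: arc\<close>)
    next
      case near
      \<comment> \<open>the complement of D is the set of vertices reachable from x along increasing edges\<close>
      show ?thesis
        by (rule separating_step_colouring_bands[where
              D = "- {v. v mod k = x mod k \<and> P x \<le> P v \<and> (P v < 5 \<or> P x + 5 \<le> P v)}" and U = "{}"])
          (use near in \<open>auto simp: prism_adj_def dest: arc\<close>)
    qed
  qed simp
qed

lemma prism_jump_set:
  fixes n a b g :: nat
  assumes "n = 5 * g" "g dvd a" "g dvd b" "0 < a" "0 < b" "2 * a < n" "2 * b < n" "a \<noteq> b"
  shows "{2 * a, 2 * b, n} = {2 * g, 4 * g, 5 * g}"
proof -
  have "c = g \<or> c = 2 * g" if "g dvd c" "0 < c" "2 * c < n" for c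
  proof -
    obtain i where "c = g * i" using \<open>g dvd c\<close> by blast
    then have "0 < i" "g * (2 * i) < g * 5" using that assms(1) by (simp_all add: ac_simps)
    then have "i = 1 \<or> i = 2" by (auto simp: mult_less_cancel1)
    then show ?thesis using \<open>c = g * i\<close> by auto
  qed
  then show ?thesis using assms by fastforce
qed

theorem theorem17:
  fixes n a b :: nat
  assumes "odd n"
    and "0 < a" and "a < n" and "0 < b" and "b < n" and "a \<noteq> b"
    and "even a \<longleftrightarrow> even b"
  shows "word_representable {0..<2*n} (circulant_adj (2*n) {a, b, n})"
proof (cases "odd a")
  case True
  then show ?thesis using assms word_representable_circulant_odd_jumps[of n "{a, b, n}"] by auto
next
  case False
  then obtain a' b' where a': "a = 2 * a'" and b': "b = 2 * b'" using assms(7)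
    by (auto elim!: evenE)
  have "\<not> int n dvd int a'" "\<not> int n dvd int b'"
    "\<not> int n dvd int a' - int b'" "\<not> int n dvd int a' + int b'"
    using not_dvd_small_combinations[of a' b' n] assms(2-6) a' b' by simp_all
  then consider
    (generic) s where "middle_half (int n) (int a' * s)" "middle_half (int n) (int b' * s)"
    | (exceptional) g where "int n = 5 * g" "g dvd int a'" "g dvd int b'"
    using middle_multiplier_exists[of "int n" "int a'" "int b'"] assms(1,2) by auto
  then show ?thesis
  proof cases
    case generic
    then show ?thesis using word_representable_circulant_even_jumps[OF assms(1)] a' b' by blast
  next
    case exceptional
    then have "n = 5 * nat g" "nat g dvd a'" "nat g dvd b'" by (auto simp flip: int_dvd_int_iff)
    then have "{a, b, n} = {2 * nat g, 4 * nat g, 5 * nat g}"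
      using prism_jump_set assms(2-6) a' b' by auto
    moreover have "0 < nat g" using \<open>n = 5 * nat g\<close> odd_pos[OF assms(1)] by linarith
    ultimately show ?thesis using word_representable_circulant_prism \<open>n = 5 * nat g\<close> by auto
  qed
qed

end
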